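(* Let $M=\mathbb{CP}^2\#k\overline{\mathbb{CP}^2}$. There is no reduced class $A=aH-\sum_{i=1}^k b_iE_i\in H_2(M;\mathbb Z)$ with $A\cdot A=-4$ and $\min_i b_i\ge1$ in any of the following cases: (1) $k\ge11$ and $K_{st}\cdot A\le2$; (2) $k=10$ and $K_{st}\cdot A<2$; (3) $k=10$, $K_{st}\cdot A=2$ and $\min_i b_i\ge3$.
   Context: $\{H,E_1,\dots,E_k\}$ is the standard basis of $H_2(M;\mathbb Z)$ ($H^2=1$, $E_i^2=-1$, pairwise orthogonal), and $K_{st}=-3H+\sum_{i=1}^kE_i$ is the standard canonical class. A class $aH-\sum b_iE_i$ is reduced if $b_1\ge\cdots\ge b_k\ge0$ and $a\ge b_1+b_2+b_3$. *)

theory Defs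
  imports Main
begin

text \<open>A class a H - sum_{i=1..k} b_i E_i in H_2(CP^2 # k (-CP^2); Z) is represented by the
  pair (a, b) with a :: int and b :: nat => int, only the values b 1, ..., b k being relevant.\<close>

definition cls_dot :: "nat \<Rightarrow> int \<times> (nat \<Rightarrow> int) \<Rightarrow> int \<times> (nat \<Rightarrow> int) \<Rightarrow> int" where
  "cls_dot k A B = fst A * fst B - (\<Sum>i=1..k. snd A i * snd B i)"

text \<open>K_st = -3H + sum E_i = -3H - sum (-1) E_i.\<close>
definition K_st :: "int \<times> (nat \<Rightarrow> int)" where
  "K_st = (-3, (\<lambda>_. -1))"

definition reduced :: "nat \<Rightarrow> int \<times> (nat \<Rightarrow> int) \<Rightarrow> bool" where
  "reduced k A \<longleftrightarrow>
     (\<forall>i j. 1 \<le> i \<longrightarrow> i \<le> j \<longrightarrow> j \<le> k \<longrightarrow> snd A j \<le> snd A i) \<and>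
     (\<forall>i\<in>{1..k}. 0 \<le> snd A i) \<and>
     snd A 1 + snd A 2 + snd A 3 \<le> fst A"

end

theory Submission
  imports Defs
begin

text \<open>
  Let A = aH - sum b_i E_i be reduced, k \<ge> 4, and let m be a lower bound for all
  b_i.  Write b = b_3 and c = K_st \<cdot> A.  Since every tail coefficient b_i (i \<ge> 4) lies in
  the interval [m, b], we have (b - b_i)(b_i - m) \<ge> 0, which bounds the sum of their squares
  by a linear expression in their sum.  Writing b_1 = b + x, b_2 = b + y, a = b_1 + b_2 + b + d
  with x, y, d \<ge> 0 and eliminating the tail sum via c, one obtains the key inequality

      (b + m) c + A \<cdot> A \<ge> m b (k - 9).

  With A \<cdot> A = -4 this contradicts each of the three hypotheses of the theorem:
  for m = 1 it rules out c \<le> 2 when k \<ge> 11 and c \<le> 1 when k = 10, and for m = 3 it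
  rules out c = 2 when k = 10.
\<close>

lemma sum_split_first_three:
  fixes f :: "nat \<Rightarrow> int"
  assumes "3 \<le> k"
  shows "(\<Sum>i=1..k. f i) = f 1 + f 2 + f 3 + (\<Sum>i=4..k. f i)"
proof -
  have "{1..k} = {1,2,3} \<union> {4..k}" using assms by auto
  then have "(\<Sum>i=1..k. f i) = (\<Sum>i\<in>{1,2,3}. f i) + (\<Sum>i=4..k. f i)"
    by (simp add: sum.union_disjoint)
  then show ?thesis by simp
qed

text \<open>If all values lie in [lo, hi], then (hi - f i)(f i - lo) \<ge> 0 summed over I bounds the
  sum of squares linearly in the plain sum.\<close>
lemma sum_squares_interval_bound:
  fixes f :: "'a \<Rightarrow> int" and lo hi :: int
  assumes "\<And>i. i \<in> I \<Longrightarrow> lo \<le> f i \<and> f i \<le> hi"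
  shows "(\<Sum>i\<in>I. f i * f i) \<le> (hi + lo) * (\<Sum>i\<in>I. f i) - lo * hi * int (card I)"
proof -
  have "0 \<le> (\<Sum>i\<in>I. (hi - f i) * (f i - lo))"
    by (rule sum_nonneg) (use assms in auto)
  also have "\<dots> = (\<Sum>i\<in>I. (hi + lo) * f i - f i * f i - lo * hi)"
    by (rule sum.cong) (auto simp: algebra_simps)
  also have "\<dots> = (hi + lo) * (\<Sum>i\<in>I. f i) - (\<Sum>i\<in>I. f i * f i) - lo * hi * int (card I)"
    by (simp add: sum_subtractf sum_distrib_left)
  finally show ?thesis by linarith
qed

text \<open>Here S and Q stand for the sum and the sum of
  squares of the tail coefficients, n for their number, and the expression on the left is
  (b + m)(K_st \<cdot> A) + A \<cdot> A.\<close>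
lemma key_inequality_arith:
  fixes a b1 b2 b S Q m n :: int
  assumes ord: "b \<le> b2" "b2 \<le> b1" and red: "b1 + b2 + b \<le> a" and mb: "m \<le> b"
    and tail: "Q \<le> (b + m) * S - m * b * n"
  shows "(b + m) * (-3 * a + b1 + b2 + b + S) + (a * a - (b1 * b1 + b2 * b2 + b * b + Q))
           \<ge> m * b * (n - 6)"
proof -
  define x y d where "x = b1 - b" and "y = b2 - b" and "d = a - b1 - b2 - b"
  have nonneg: "0 \<le> x" "0 \<le> y" "0 \<le> d" "0 \<le> b - m"
    using ord red mb unfolding x_def y_def d_def by auto
  have "(b + m) * (-3 * a + b1 + b2 + b + S) + (a * a - (b1 * b1 + b2 * b2 + b * b + Q))
          - m * b * (n - 6)
        = ((b + m) * S - m * b * n - Q) + 2 * x * y + d * d + 2 * d * (x + y)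
          + 2 * (b - m) * (x + y) + 3 * (b - m) * d"
    unfolding x_def y_def d_def by (simp add: algebra_simps)
  moreover have "0 \<le> 2 * x * y + d * d + 2 * d * (x + y) + 2 * (b - m) * (x + y) + 3 * (b - m) * d"
    using nonneg by simp
  ultimately show ?thesis using tail by linarith
qed

lemma reduced_key_inequality:
  assumes red: "reduced k (a, b)" and k4: "4 \<le> k" and lower: "\<forall>i\<in>{1..k}. m \<le> b i"
  shows "(b 3 + m) * cls_dot k K_st (a, b) + cls_dot k (a, b) (a, b) \<ge> m * b 3 * (int k - 9)"
proof -
  define S Q where "S = (\<Sum>i=4..k. b i)" and "Q = (\<Sum>i=4..k. b i * b i)"
  have mono: "\<And>i j. 1 \<le> i \<Longrightarrow> i \<le> j \<Longrightarrow> j \<le> k \<Longrightarrow> b j \<le> b i"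
    using red unfolding reduced_def by auto
  have tail_range: "\<And>i. i \<in> {4..k} \<Longrightarrow> m \<le> b i \<and> b i \<le> b 3"
    using lower mono by auto
  have tail: "Q \<le> (b 3 + m) * S - m * b 3 * (int k - 3)"
  proof -
    have "int (card {4..k}) = int k - 3" using k4 by simp
    then show ?thesis
      using sum_squares_interval_bound[where I = "{4..k}", OF tail_range]
      unfolding S_def Q_def by simp
  qed
  have K_dot: "cls_dot k K_st (a, b) = -3 * a + b 1 + b 2 + b 3 + S"
    using sum_split_first_three[of k "\<lambda>i. - b i"] k4
    unfolding cls_dot_def K_st_def S_def by (simp add: sum_negf)
  have self_dot: "cls_dot k (a, b) (a, b) = a * a - (b 1 * b 1 + b 2 * b 2 + b 3 * b 3 + Q)"
    using sum_split_first_three[of k "\<lambda>i. b i * b i"] k4 unfolding cls_dot_def Q_def by simp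
  have "b 3 \<le> b 2" "b 2 \<le> b 1" "m \<le> b 3"
    using mono lower k4 by auto
  moreover have "b 1 + b 2 + b 3 \<le> a" using red unfolding reduced_def by simp
  ultimately have "(b 3 + m) * (-3 * a + b 1 + b 2 + b 3 + S)
      + (a * a - (b 1 * b 1 + b 2 * b 2 + b 3 * b 3 + Q)) \<ge> m * b 3 * ((int k - 3) - 6)"
    using key_inequality_arith tail by blast
  then show ?thesis unfolding K_dot self_dot by (simp add: algebra_simps)
qed

theorem proposition5p5:
  fixes k :: nat
  shows "\<not> (\<exists>a b. reduced k (a, b) \<and> cls_dot k (a, b) (a, b) = -4 \<and>
             (\<forall>i\<in>{1..k}. 1 \<le> b i) \<and>
             ((k \<ge> 11 \<and> cls_dot k K_st (a, b) \<le> 2) \<or>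
              (k = 10 \<and> cls_dot k K_st (a, b) < 2) \<or>
              (k = 10 \<and> cls_dot k K_st (a, b) = 2 \<and> (\<forall>i\<in>{1..k}. 3 \<le> b i))))"
proof clarify
  fix a b
  assume red: "reduced k (a, b)" and sq: "cls_dot k (a, b) (a, b) = -4"
    and pos: "\<forall>i\<in>{1..k}. 1 \<le> b i"
    and cases: "(k \<ge> 11 \<and> cls_dot k K_st (a, b) \<le> 2) \<or>
              (k = 10 \<and> cls_dot k K_st (a, b) < 2) \<or>
              (k = 10 \<and> cls_dot k K_st (a, b) = 2 \<and> (\<forall>i\<in>{1..k}. 3 \<le> b i))"
  define c where "c = cls_dot k K_st (a, b)"
  have k10: "10 \<le> k" using cases by auto
  have b3: "1 \<le> b 3" using pos k10 by auto
  have key1: "(b 3 + 1) * c \<ge> 4 + b 3 * (int k - 9)"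
    using reduced_key_inequality[OF red _ pos] k10 sq unfolding c_def by simp
  consider "c \<le> 2" "11 \<le> k" | "c \<le> 1" "k = 10" | "c = 2" "k = 10" "\<forall>i\<in>{1..k}. 3 \<le> b i"
    using cases unfolding c_def by force
  then show False
  proof cases
    case 1
    then have "(b 3 + 1) * c \<le> (b 3 + 1) * 2" using b3 by (intro mult_left_mono) auto
    moreover have "b 3 * (int k - 9) \<ge> b 3 * 2" using 1 b3 by (intro mult_left_mono) auto
    ultimately show False using key1 by (simp add: algebra_simps)
  next
    case 2
    then have "(b 3 + 1) * c \<le> (b 3 + 1) * 1" using b3 by (intro mult_left_mono) auto
    then show False using key1 2 by simp
  next
    case 3
    have "(b 3 + 3) * c \<ge> 3 * b 3 * (int k - 9) - cls_dot k (a, b) (a, b)"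
      using reduced_key_inequality[OF red _ 3(3)] k10 unfolding c_def by simp
    then have "b 3 \<le> 2" using 3 sq by simp
    moreover have "3 \<le> b 3" using 3 by auto
    ultimately show False by simp
  qed
qed

end
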